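(* Let $p,n\ge1$, let $a_1,\dots,a_n\in\mathbb{C}$ be distinct, let $m_1,\dots,m_n\ge1$ be integers, let $C_0$ and $B_k^{(j)}$ be complex $p\times p$ matrices, let $\|\cdot\|$ be any induced matrix norm, and let $$R(\lambda)=I\lambda-C_0+\sum_{j=1}^n\sum_{k=1}^{m_j}\frac{B_k^{(j)}}{(\lambda-a_j)^k}.$$ If $\lambda_0$ is an eigenvalue of $R(\lambda)$, then $$|\lambda_0|\le\max_{1\le j\le n}\Big\{|a_j|+\cos\Big(\frac{\pi}{m_j+1}\Big),\ \|C_0\|\Big\}+\frac12\left(\sqrt{\sum_{j=1}^n m_j}+\sqrt{\sum_{j=1}^n\sum_{k=1}^{m_j}\|B_k^{(j)}\|^2}\right).$$
   Context: A scalar $\lambda_0\in\mathbb{C}\setminus\{a_1,\dots,a_n\}$ is an eigenvalue of $R(\lambda)$ if there is a nonzero $v\in\mathbb{C}^p$ with $R(\lambda_0)v=0$. *)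

theory Defs
  imports "HOL-Analysis.Analysis"
begin

definition is_vector_norm :: "(complex^'p \<Rightarrow> real) \<Rightarrow> bool" where
  "is_vector_norm N \<longleftrightarrow>
     (\<forall>x. N x = 0 \<longleftrightarrow> x = 0) \<and>
     (\<forall>c x. N (c *s x) = cmod c * N x) \<and>
     (\<forall>x y. N (x + y) \<le> N x + N y)"

definition induced_norm :: "(complex^'p \<Rightarrow> real) \<Rightarrow> complex^'p^'p \<Rightarrow> real" where
  "induced_norm N A = (SUP x\<in>{x. x \<noteq> 0}. N (A *v x) / N x)"

definition mat_smult :: "complex \<Rightarrow> complex^'p^'p \<Rightarrow> complex^'p^'p" where
  "mat_smult c A = (\<chi> i j. c * A $ i $ j)"

definition Rmat :: "nat \<Rightarrow> (nat \<Rightarrow> complex) \<Rightarrow> (nat \<Rightarrow> nat) \<Rightarrow> complex^'p^'p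
     \<Rightarrow> (nat \<Rightarrow> nat \<Rightarrow> complex^'p^'p) \<Rightarrow> complex \<Rightarrow> complex^'p^'p" where
  "Rmat n a m C0 B lam = mat_smult lam (mat 1) - C0 +
     (\<Sum>j<n. \<Sum>k=1..m j. mat_smult (1 / (lam - a j) ^ k) (B j k))"

definition is_eigenvalue_R :: "nat \<Rightarrow> (nat \<Rightarrow> complex) \<Rightarrow> (nat \<Rightarrow> nat) \<Rightarrow> complex^'p^'p
     \<Rightarrow> (nat \<Rightarrow> nat \<Rightarrow> complex^'p^'p) \<Rightarrow> complex \<Rightarrow> bool" where
  "is_eigenvalue_R n a m C0 B lam0 \<longleftrightarrow>
     lam0 \<notin> a ` {..<n} \<and> (\<exists>v. v \<noteq> 0 \<and> Rmat n a m C0 B lam0 *v v = 0)"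

end

theory Submission
  imports Defs
begin

text \<open>
  Applying R(\<lambda>0) to an eigenvector and taking norms gives
  |\<lambda>0| \<le> ||C0|| + \<Sum>j,k ||B_k^(j)|| / |\<lambda>0 - a_j|^k.
  Let M be the maximum in the bound, t = (sqrt (\<Sum>j m_j) + sqrt (\<Sum>j,k ||B_k^(j)||^2)) / 2,
  and suppose x = |\<lambda>0| - M > t. Then |\<lambda>0 - a_j|^k \<ge> x for all j, k: for k = 1 because
  cos (\<pi> / (m_j + 1)) \<ge> 0, and for k \<ge> 2 because then cos (\<pi> / (m_j + 1)) \<ge> 1/2 and
  x > sqrt 2 / 2 force |\<lambda>0 - a_j| \<ge> 1. Hence
  x^2 \<le> \<Sum>j,k ||B_k^(j)|| \<le> sqrt (\<Sum>j m_j) sqrt (\<Sum>j,k ||B_k^(j)||^2) \<le> t^2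
  by Cauchy--Schwarz and AM--GM, a contradiction.
\<close>

lemma is_vector_norm_zero: "is_vector_norm N \<Longrightarrow> N 0 = 0"
  unfolding is_vector_norm_def by auto

lemma is_vector_norm_smult: "is_vector_norm N \<Longrightarrow> N (c *s x) = cmod c * N x"
  unfolding is_vector_norm_def by blast

lemma is_vector_norm_triangle: "is_vector_norm N \<Longrightarrow> N (x + y) \<le> N x + N y"
  unfolding is_vector_norm_def by blast

lemma is_vector_norm_minus: "is_vector_norm N \<Longrightarrow> N (- x) = N x"
  using is_vector_norm_smult[of N "-1" x] by (simp add: vec_eq_iff)

lemma is_vector_norm_nonneg: "is_vector_norm N \<Longrightarrow> 0 \<le> N x"
  using is_vector_norm_triangle[of N x "- x"] is_vector_norm_minus[of N x]
  by (simp add: is_vector_norm_zero)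

lemma is_vector_norm_pos: "is_vector_norm N \<Longrightarrow> x \<noteq> 0 \<Longrightarrow> 0 < N x"
  using is_vector_norm_nonneg[of N x] unfolding is_vector_norm_def by force

lemma is_vector_norm_diff: "is_vector_norm N \<Longrightarrow> N (x - y) \<le> N x + N y"
  using is_vector_norm_triangle[of N x "- y"] is_vector_norm_minus[of N y] by simp

lemma is_vector_norm_abs_diff: "is_vector_norm N \<Longrightarrow> \<bar>N x - N y\<bar> \<le> N (x - y)"
  using is_vector_norm_triangle[of N "x - y" y] is_vector_norm_triangle[of N "y - x" x]
    is_vector_norm_minus[of N "x - y"]
  by simp

lemma is_vector_norm_sum:
  assumes "is_vector_norm N"
  shows "N (sum f A) \<le> (\<Sum>i\<in>A. N (f i))"
proof (induction A rule: infinite_finite_induct)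
  case (insert i A)
  then show ?case
    using is_vector_norm_triangle[OF assms, of "f i" "sum f A"] by simp
qed (simp_all add: is_vector_norm_zero[OF assms])

lemma is_vector_norm_scaleR: "is_vector_norm N \<Longrightarrow> N (r *\<^sub>R x) = \<bar>r\<bar> * N x"
proof -
  have "r *\<^sub>R x = complex_of_real r *s x"
    by (simp add: vec_eq_iff of_real_def)
  then show "is_vector_norm N \<Longrightarrow> N (r *\<^sub>R x) = \<bar>r\<bar> * N x"
    by (simp add: is_vector_norm_smult)
qed

lemma is_vector_norm_le_norm:
  fixes N :: "complex^'p \<Rightarrow> real"
  assumes "is_vector_norm N"
  obtains c where "0 \<le> c" and "\<And>x. N x \<le> c * norm x"
proof
  define c where "c = (\<Sum>i\<in>UNIV. N (axis i (1::complex)))"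
  show "0 \<le> c"
    unfolding c_def by (intro sum_nonneg is_vector_norm_nonneg[OF assms])
  fix x :: "complex^'p"
  have "N x = N (\<Sum>i\<in>UNIV. x$i *s axis i 1)"
    by (simp add: basis_expansion)
  also have "\<dots> \<le> (\<Sum>i\<in>UNIV. N (x$i *s axis i 1))"
    by (rule is_vector_norm_sum[OF assms])
  also have "\<dots> = (\<Sum>i\<in>UNIV. cmod (x$i) * N (axis i 1))"
    by (simp add: is_vector_norm_smult[OF assms])
  also have "\<dots> \<le> (\<Sum>i\<in>UNIV. norm x * N (axis i 1))"
    by (intro sum_mono mult_right_mono Finite_Cartesian_Product.norm_nth_le is_vector_norm_nonneg[OF assms])
  also have "\<dots> = c * norm x"
    by (simp add: c_def sum_distrib_left mult.commute)
  finally show "N x \<le> c * norm x" .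
qed

lemma is_vector_norm_continuous_on:
  assumes "is_vector_norm N"
  shows "continuous_on S N"
proof -
  obtain c where "0 \<le> c" and c: "\<And>x. N x \<le> c * norm x"
    using is_vector_norm_le_norm[OF assms] by blast
  have "c-lipschitz_on S N"
  proof (rule lipschitz_onI)
    fix x y
    show "dist (N x) (N y) \<le> c * dist x y"
      using is_vector_norm_abs_diff[OF assms, of x y] c[of "x - y"]
      by (simp add: dist_real_def dist_norm)
  qed fact
  then show ?thesis
    by (rule lipschitz_on_continuous_on)
qed

lemma is_vector_norm_ge_norm:
  fixes N :: "complex^'p \<Rightarrow> real"
  assumes "is_vector_norm N"
  obtains \<mu> where "0 < \<mu>" and "\<And>x. \<mu> * norm x \<le> N x"
proof -
  have "sphere (0::complex^'p) 1 \<noteq> {}"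
    by simp
  then obtain y where y: "y \<in> sphere 0 1" and min: "\<And>x. x \<in> sphere 0 1 \<Longrightarrow> N y \<le> N x"
    using continuous_attains_inf[OF compact_sphere _ is_vector_norm_continuous_on[OF assms]] by blast
  have "N y * norm x \<le> N x" for x
  proof (cases "x = 0")
    case False
    have "N y \<le> N ((1 / norm x) *\<^sub>R x)"
      using min False by simp
    also have "\<dots> = N x / norm x"
      by (simp add: is_vector_norm_scaleR[OF assms])
    finally show ?thesis
      using False by (simp add: field_simps)
  qed (simp add: is_vector_norm_zero[OF assms])
  moreover have "0 < N y"
    using y by (intro is_vector_norm_pos[OF assms]) auto
  ultimately show thesis
    using that by blast
qed

lemma bdd_above_induced_norm_quotients:
  assumes "is_vector_norm N"
  shows "bdd_above ((\<lambda>x. N (A *v x) / N x) ` {x. x \<noteq> 0})"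
proof -
  obtain c where "0 \<le> c" and c: "\<And>x. N x \<le> c * norm x"
    using is_vector_norm_le_norm[OF assms] by blast
  obtain \<mu> where "0 < \<mu>" and \<mu>: "\<And>x. \<mu> * norm x \<le> N x"
    using is_vector_norm_ge_norm[OF assms] by blast
  obtain K where "0 < K" and K: "\<And>x. norm (A *v x) \<le> norm x * K"
    using bounded_linear.pos_bounded[OF matrix_vector_mul_bounded_linear] by blast
  have "N (A *v x) / N x \<le> c * K / \<mu>" if "x \<noteq> 0" for x
  proof -
    have "N (A *v x) \<le> c * (norm x * K)"
      using c[of "A *v x"] K[of x] \<open>0 \<le> c\<close> by (meson mult_left_mono order_trans)
    also have "\<dots> \<le> c * (N x / \<mu> * K)"
      using \<mu>[of x] \<open>0 < \<mu>\<close> \<open>0 \<le> c\<close> \<open>0 < K\<close>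
      by (intro mult_left_mono mult_right_mono) (auto simp: field_simps intro: order_trans[OF norm_ge_zero])
    finally show ?thesis
      using is_vector_norm_pos[OF assms that] by (simp add: divide_le_eq field_simps)
  qed
  then show ?thesis
    by (intro bdd_aboveI2) auto
qed

lemma induced_norm_mult_vec_le:
  assumes "is_vector_norm N"
  shows "N (A *v x) \<le> induced_norm N A * N x"
proof (cases "x = 0")
  case False
  have "N (A *v x) / N x \<le> induced_norm N A"
    unfolding induced_norm_def
    using bdd_above_induced_norm_quotients[OF assms] False by (intro cSUP_upper) auto
  then show ?thesis
    using is_vector_norm_pos[OF assms False] by (simp add: divide_le_eq)
qed (simp add: is_vector_norm_zero[OF assms])

lemma induced_norm_nonneg:
  fixes A :: "complex^'p^'p"
  assumes "is_vector_norm N"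
  shows "0 \<le> induced_norm N A"
proof -
  let ?x = "axis undefined 1 :: complex^'p"
  have "N (A *v ?x) / N ?x \<le> induced_norm N A"
    unfolding induced_norm_def
    using bdd_above_induced_norm_quotients[OF assms] by (intro cSUP_upper) auto
  moreover have "0 \<le> N (A *v ?x) / N ?x"
    using is_vector_norm_nonneg[OF assms] by simp
  ultimately show ?thesis
    by linarith
qed

lemma mat_smult_mult_vec: "mat_smult c A *v x = c *s (A *v x)"
  by (simp add: vec_eq_iff mat_smult_def matrix_vector_mult_def sum_distrib_left mult.assoc)

lemma sum_mult_vec: "sum f S *v x = (\<Sum>i\<in>S. f i *v x)"
  by (induction S rule: infinite_finite_induct) (auto simp: matrix_vector_mult_add_rdistrib)

lemma Rmat_mult_vec:
  "Rmat n a m C0 B lam *v v =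
     lam *s v - C0 *v v + (\<Sum>j<n. \<Sum>k=1..m j. (1 / (lam - a j) ^ k) *s (B j k *v v))"
  unfolding Rmat_def
  by (simp add: matrix_vector_mult_add_rdistrib matrix_vector_mult_diff_rdistrib
      sum_mult_vec mat_smult_mult_vec)

lemma is_eigenvalue_R_norm_le:
  assumes N: "is_vector_norm N" and "is_eigenvalue_R n a m C0 B lam0"
  shows "cmod lam0 \<le> induced_norm N C0
           + (\<Sum>j<n. \<Sum>k=1..m j. induced_norm N (B j k) / cmod (lam0 - a j) ^ k)"
    (is "_ \<le> _ + ?S")
proof -
  obtain v where "v \<noteq> 0" and v: "Rmat n a m C0 B lam0 *v v = 0"
    using assms(2) unfolding is_eigenvalue_R_def by blast
  define T where "T = (\<Sum>j<n. \<Sum>k=1..m j. (1 / (lam0 - a j) ^ k) *s (B j k *v v))"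
  have "N T \<le> (\<Sum>j<n. \<Sum>k=1..m j. N ((1 / (lam0 - a j) ^ k) *s (B j k *v v)))"
    unfolding T_def by (intro order_trans[OF is_vector_norm_sum[OF N]] sum_mono is_vector_norm_sum[OF N])
  also have "\<dots> \<le> (\<Sum>j<n. \<Sum>k=1..m j. induced_norm N (B j k) / cmod (lam0 - a j) ^ k * N v)"
    using induced_norm_mult_vec_le[OF N]
    by (intro sum_mono) (simp add: is_vector_norm_smult[OF N] norm_divide norm_power divide_right_mono)
  finally have NT: "N T \<le> ?S * N v"
    by (simp add: sum_distrib_right)
  have "lam0 *s v = C0 *v v - T"
    using v by (simp add: Rmat_mult_vec T_def algebra_simps eq_neg_iff_add_eq_0)
  then have "cmod lam0 * N v \<le> N (C0 *v v) + N T"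
    using is_vector_norm_diff[OF N] by (metis is_vector_norm_smult[OF N])
  also have "\<dots> \<le> (induced_norm N C0 + ?S) * N v"
    using NT induced_norm_mult_vec_le[OF N, of C0 v] by (simp add: distrib_right)
  finally show ?thesis
    using is_vector_norm_pos[OF N \<open>v \<noteq> 0\<close>] by simp
qed

lemma power_ge_if_ge_add_cos:
  fixes d x :: real
  assumes k: "k \<in> {1..m}" and d: "x + cos (pi / (real m + 1)) \<le> d" and x: "sqrt m / 2 \<le> x"
  shows "x \<le> d ^ k"
proof (cases "k = 1")
  case True
  have "pi / (real m + 1) \<le> pi / 2"
    using k by (intro divide_left_mono) auto
  moreover have "0 \<le> pi / (real m + 1)"
    by simp
  ultimately have "0 \<le> cos (pi / (real m + 1))"
    by (intro cos_ge_zero) linarith+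
  then show ?thesis
    using True d by simp
next
  case False
  then have "2 \<le> m"
    using k by auto
  then have "pi / (real m + 1) \<le> pi / 3"
    by (intro divide_left_mono) auto
  then have "1/2 \<le> cos (pi / (real m + 1))"
    using cos_monotone_0_pi_le[of "pi / (real m + 1)" "pi / 3"] by (simp add: cos_60)
  moreover have "1 \<le> sqrt m"
    using \<open>2 \<le> m\<close> by simp
  ultimately have "x \<le> d" and "1 \<le> d"
    using d x by linarith+
  moreover have "d \<le> d ^ k"
    using k \<open>1 \<le> d\<close> by (intro self_le_power) auto
  ultimately show ?thesis
    by linarith
qed

lemma double_sum_le_sqrt_mult:
  fixes b :: "nat \<Rightarrow> nat \<Rightarrow> real"
  shows "(\<Sum>j<n. \<Sum>k=1..m j. b j k)
           \<le> sqrt (\<Sum>j<n. real (m j)) * sqrt (\<Sum>j<n. \<Sum>k=1..m j. (b j k)\<^sup>2)"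
proof -
  define I where "I = (SIGMA j:{..<n}. {1..m j})"
  have sum_I: "(\<Sum>j<n. \<Sum>k=1..m j. f j k) = (\<Sum>(j, k)\<in>I. f j k)" for f :: "nat \<Rightarrow> nat \<Rightarrow> real"
    unfolding I_def by (rule sum.Sigma) auto
  have "(\<Sum>(j, k)\<in>I. 1 * b j k)\<^sup>2 \<le> (\<Sum>(j, k)\<in>I. 1\<^sup>2) * (\<Sum>(j, k)\<in>I. (b j k)\<^sup>2)"
    using Cauchy_Schwarz_ineq_sum[of "\<lambda>_. 1" "case_prod b" I] by (simp add: case_prod_unfold)
  then have "(\<Sum>j<n. \<Sum>k=1..m j. b j k)\<^sup>2 \<le> (\<Sum>j<n. real (m j)) * (\<Sum>j<n. \<Sum>k=1..m j. (b j k)\<^sup>2)"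
    unfolding sum_I[of b] sum_I[of "\<lambda>j k. (b j k)\<^sup>2"] sum_I[of "\<lambda>_ _. 1", simplified] by simp
  then show ?thesis
    unfolding real_sqrt_mult[symmetric] by (rule real_le_rsqrt)
qed

lemma le_half_sum_sqrts_of_le_sum_div_powers:
  fixes x :: real and d :: "nat \<Rightarrow> real" and b :: "nat \<Rightarrow> nat \<Rightarrow> real"
  assumes "0 < x" and d: "\<And>j k. j < n \<Longrightarrow> k \<in> {1..m j} \<Longrightarrow> x \<le> d j ^ k"
    and b: "\<And>j k. 0 \<le> b j k" and x: "x \<le> (\<Sum>j<n. \<Sum>k=1..m j. b j k / d j ^ k)"
  shows "x \<le> 1/2 * (sqrt (\<Sum>j<n. real (m j)) + sqrt (\<Sum>j<n. \<Sum>k=1..m j. (b j k)\<^sup>2))"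
proof -
  define u where "u = sqrt (\<Sum>j<n. real (m j))"
  define w where "w = sqrt (\<Sum>j<n. \<Sum>k=1..m j. (b j k)\<^sup>2)"
  have "(\<Sum>j<n. \<Sum>k=1..m j. b j k / d j ^ k) \<le> (\<Sum>j<n. \<Sum>k=1..m j. b j k / x)"
  proof (intro sum_mono)
    fix j k
    assume "j \<in> {..<n}" and "k \<in> {1..m j}"
    then have "x \<le> d j ^ k"
      using d by blast
    then show "b j k / d j ^ k \<le> b j k / x"
      using b \<open>0 < x\<close> by (intro divide_left_mono) auto
  qed
  with x have "x \<le> (\<Sum>j<n. \<Sum>k=1..m j. b j k / x)"
    by linarith
  then have "x\<^sup>2 \<le> (\<Sum>j<n. \<Sum>k=1..m j. b j k)"
    using \<open>0 < x\<close> by (simp add: sum_divide_distrib[symmetric] le_divide_eq power2_eq_square)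
  also have "\<dots> \<le> u * w"
    unfolding u_def w_def by (rule double_sum_le_sqrt_mult)
  also have "\<dots> \<le> (1/2 * (u + w))\<^sup>2"
    using sum_power2_ge_zero[of "u - w" 0] by (simp add: power2_eq_square algebra_simps)
  finally show ?thesis
    unfolding u_def w_def
    by (rule power2_le_imp_le) (intro mult_nonneg_nonneg add_nonneg_nonneg real_sqrt_ge_zero sum_nonneg; simp)
qed

theorem corollary3p11:
  fixes n :: nat and a :: "nat \<Rightarrow> complex" and m :: "nat \<Rightarrow> nat"
    and C0 :: "complex^'p^'p" and B :: "nat \<Rightarrow> nat \<Rightarrow> complex^'p^'p"
    and N :: "complex^'p \<Rightarrow> real" and lam0 :: complex
  assumes "n \<ge> 1"
    and "inj_on a {..<n}"
    and "\<forall>j<n. m j \<ge> 1"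
    and "is_vector_norm N"
    and "is_eigenvalue_R n a m C0 B lam0"
  shows "cmod lam0 \<le>
     max (Max {cmod (a j) + cos (pi / (real (m j) + 1)) | j. j < n}) (induced_norm N C0)
     + 1/2 * (sqrt (\<Sum>j<n. real (m j))
              + sqrt (\<Sum>j<n. \<Sum>k=1..m j. (induced_norm N (B j k))\<^sup>2))"
    (is "_ \<le> ?M + ?t")
proof (rule ccontr)
  assume exceeds: "\<not> ?thesis"
  define x where "x = cmod lam0 - ?M"
  have "?t < x"
    using exceeds unfolding x_def by linarith
  have "sqrt (\<Sum>j<n. real (m j)) / 2 \<le> ?t"
    by (simp add: sum_nonneg)
  then have x_large: "sqrt (\<Sum>j<n. real (m j)) / 2 < x"
    using \<open>?t < x\<close> by (rule order_le_less_trans)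
  have "x \<le> cmod (lam0 - a j) ^ k" if "j < n" and "k \<in> {1..m j}" for j k
  proof (rule power_ge_if_ge_add_cos[OF that(2)])
    have "cmod (a j) + cos (pi / (real (m j) + 1)) \<le> ?M"
      using \<open>j < n\<close> by (intro max.coboundedI1 Max_ge) auto
    then show "x + cos (pi / (real (m j) + 1)) \<le> cmod (lam0 - a j)"
      unfolding x_def using norm_triangle_ineq2[of lam0 "a j"] by linarith
    have "sqrt (m j) \<le> sqrt (\<Sum>j<n. real (m j))"
      using \<open>j < n\<close> by (intro real_sqrt_le_mono member_le_sum) auto
    then show "sqrt (m j) / 2 \<le> x"
      using x_large by linarith
  qed
  moreover have "x \<le> (\<Sum>j<n. \<Sum>k=1..m j. induced_norm N (B j k) / cmod (lam0 - a j) ^ k)"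
    using is_eigenvalue_R_norm_le[OF assms(4,5)] unfolding x_def by linarith
  moreover have "0 < x"
    by (rule order_le_less_trans[OF _ x_large]) (simp add: sum_nonneg)
  ultimately have "x \<le> ?t"
    by (intro le_half_sum_sqrts_of_le_sum_div_powers induced_norm_nonneg[OF assms(4)])
  with \<open>?t < x\<close> show False
    by simp
qed

end
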